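(* Fix a constant $c>0$. There is a constant $\varepsilon>0$ (depending only on $c$) such that for every sufficiently large $n$ and every $c$-Ramsey graph $G$ with $n$ vertices, every treelike resolution refutation of $\Psi'_G$ has at least $n^{\varepsilon\log n}$ clauses; i.e. $\Psi'_G$ requires treelike resolution refutations of size $n^{\Omega(\log n)}$.
   Context: Logarithms are base 2. A graph $G$ on $n$ vertices is $c$-Ramsey if no set of $c\log n$ vertices is a clique or an independent set (assume $c\log n$ is an integer). A resolution refutation of a CNF is a sequence of clauses, each a clause of the formula or derived from earlier clauses $A\lor x$, $B\lor\neg x$ as $A\lor B$, ending in the empty clause; it is treelike if each derived clause is used as a premise at most once. The "unary encoding" $\Psi'_G$ has variables $p^i_v$ for $i\in[c\log n]$ and $v\in V(G)$ (meaning index $i$ is mapped to vertex $v$) and a variable $y$, with clauses: for each $i$, $\bigvee_{v}p^i_v$, and $\neg p^i_u\lor\neg p^i_v$ for distinct $u,v$ (each index maps to exactly one vertex); for each vertex $v$ and distinct $i,j$, $\neg p^i_v\lor\neg p^j_v$ (injectivity); for distinct $u,v$ with $\{u,v\}\in E(G)$ and distinct $i,j$, $y\lor\neg p^i_u\lor\neg p^j_v$; for distinct $u,v$ with $\{u,v\}\notin E(G)$ and distinct $i,j$, $\neg y\lor\neg p^i_u\lor\neg p^j_v$. Thus $\Psi'_G$ is satisfiable iff $G$ has a clique or independent set of size $c\log n$. *)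

theory Defs
  imports Complex_Main
begin

definition simple_graph :: "nat \<Rightarrow> nat set set \<Rightarrow> bool" where
  "simple_graph n E \<longleftrightarrow> (\<forall>e\<in>E. \<exists>u v. u < n \<and> v < n \<and> u \<noteq> v \<and> e = {u, v})"

definition is_clique :: "nat set set \<Rightarrow> nat set \<Rightarrow> bool" where
  "is_clique E S \<longleftrightarrow> (\<forall>u\<in>S. \<forall>v\<in>S. u \<noteq> v \<longrightarrow> {u, v} \<in> E)"

definition is_indep :: "nat set set \<Rightarrow> nat set \<Rightarrow> bool" where
  "is_indep E S \<longleftrightarrow> (\<forall>u\<in>S. \<forall>v\<in>S. u \<noteq> v \<longrightarrow> {u, v} \<notin> E)"

text \<open>G (on n vertices) is c-Ramsey: no set of c log n (= k) vertices is a clique or an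
  independent set. Here k is the natural number with real k = c * log 2 n.\<close>
definition ramsey_graph :: "nat \<Rightarrow> nat \<Rightarrow> nat set set \<Rightarrow> bool" where
  "ramsey_graph n k E \<longleftrightarrow>
     (\<forall>S. S \<subseteq> {0..<n} \<and> card S = k \<longrightarrow> \<not> is_clique E S \<and> \<not> is_indep E S)"

datatype 'a lit = Pos 'a | Neg 'a

type_synonym 'a clause = "'a lit set"

datatype pvar = P nat nat | Y  \<comment> \<open>P i v: index i is mapped to vertex v\<close>

definition Psi' :: "nat \<Rightarrow> nat \<Rightarrow> nat set set \<Rightarrow> pvar clause set" where
  "Psi' n k E =
     {{Pos (P i v) | v. v < n} | i. i < k}
   \<union> {{Neg (P i u), Neg (P i v)} | i u v. i < k \<and> u < n \<and> v < n \<and> u \<noteq> v}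
   \<union> {{Neg (P i v), Neg (P j v)} | i j v. v < n \<and> i < k \<and> j < k \<and> i \<noteq> j}
   \<union> {{Pos Y, Neg (P i u), Neg (P j v)} | i j u v.
         u < n \<and> v < n \<and> u \<noteq> v \<and> {u, v} \<in> E \<and> i < k \<and> j < k \<and> i \<noteq> j}
   \<union> {{Neg Y, Neg (P i u), Neg (P j v)} | i j u v.
         u < n \<and> v < n \<and> u \<noteq> v \<and> {u, v} \<notin> E \<and> i < k \<and> j < k \<and> i \<noteq> j}"

text \<open>A resolution proof is a list of lines (C, just). If just = None, C must be a clause
  of the formula; if just = Some (j, l) then j, l are earlier lines, and C is obtained
  from line j (containing x) and line l (containing the negation of x) by resolving on x.\<close>
type_synonym 'a proof_line = "'a clause \<times> (nat \<times> nat) option"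

definition resolvent :: "'a clause \<Rightarrow> 'a clause \<Rightarrow> 'a clause \<Rightarrow> bool" where
  "resolvent A B C \<longleftrightarrow> (\<exists>x. Pos x \<in> A \<and> Neg x \<in> B \<and> C = (A - {Pos x}) \<union> (B - {Neg x}))"

definition valid_line :: "'a clause set \<Rightarrow> 'a proof_line list \<Rightarrow> nat \<Rightarrow> bool" where
  "valid_line F \<pi> i \<longleftrightarrow>
     (case snd (\<pi> ! i) of
        None \<Rightarrow> fst (\<pi> ! i) \<in> F
      | Some (j, l) \<Rightarrow> j < i \<and> l < i \<and> resolvent (fst (\<pi> ! j)) (fst (\<pi> ! l)) (fst (\<pi> ! i)))"

definition refutation :: "'a clause set \<Rightarrow> 'a proof_line list \<Rightarrow> bool" where
  "refutation F \<pi> \<longleftrightarrow> \<pi> \<noteq> [] \<and> (\<forall>i < length \<pi>. valid_line F \<pi> i) \<and> fst (last \<pi>) = {}"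

definition premises_of :: "'a proof_line \<Rightarrow> nat list" where
  "premises_of line = (case snd line of None \<Rightarrow> [] | Some (j, l) \<Rightarrow> [j, l])"

definition uses :: "'a proof_line list \<Rightarrow> nat \<Rightarrow> nat" where
  "uses \<pi> i = length (filter (\<lambda>j. j = i) (concat (map premises_of \<pi>)))"

definition treelike :: "'a proof_line list \<Rightarrow> bool" where
  "treelike \<pi> \<longleftrightarrow> (\<forall>i < length \<pi>. snd (\<pi> ! i) \<noteq> None \<longrightarrow> uses \<pi> i \<le> 1)"

end

theory Submission
  imports Defs "HOL-Combinatorics.Multiset_Permutations"
begin

text \<open>A refutation of \<open>\<Psi>'\<^sub>G\<close> exists only if \<open>G\<close> has no homogeneous set of size \<open>k\<close>; the
  Ramsey hypothesis serves only to guarantee this, so the bound holds for every graph.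
  Fix a colour \<open>t\<close> and, for a partial assignment \<open>\<rho>\<close>, count the \<open>t\<close>-homogeneous vertex sets
  \<open>K\<close> with which \<open>\<rho>\<close> is consistent, i.e. \<open>\<rho>\<close> may still be extended to an injective placement
  of the indices into \<open>K\<close> with \<open>y = t\<close>. Setting one more variable splits this count into two,
  and an assignment falsifying an axiom is consistent with at most one \<open>K\<close>. Following a
  treelike refutation from the empty clause, with which every \<open>K\<close> is consistent, back to the
  axioms therefore bounds the number of \<open>t\<close>-homogeneous sets by the number of lines plus one.
  Counting ordered homogeneous lists along the Erdos-Szekeres recursion shows that for
  \<open>s = \<lfloor>log n / 8\<rfloor>\<close> one colour has at least \<open>2^(s^2) > n^(log n / 512)\<close> homogeneous sets.\<close>

section \<open>Splitting measures on treelike refutations\<close>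

fun lit_false :: "('a \<rightharpoonup> bool) \<Rightarrow> 'a lit \<Rightarrow> bool" where
  "lit_false \<rho> (Pos x) \<longleftrightarrow> \<rho> x = Some False"
| "lit_false \<rho> (Neg x) \<longleftrightarrow> \<rho> x = Some True"

definition falsifies :: "('a \<rightharpoonup> bool) \<Rightarrow> 'a clause \<Rightarrow> bool" where
  "falsifies \<rho> C \<longleftrightarrow> (\<forall>l\<in>C. lit_false \<rho> l)"

lemma falsifies_upd: "falsifies \<rho> C \<Longrightarrow> \<rho> x = None \<Longrightarrow> falsifies (\<rho>(x \<mapsto> b)) C"
  unfolding falsifies_def by (metis lit_false.simps fun_upd_other lit.exhaust option.distinct(1))

lemma resolvent_falsified:
  assumes "resolvent A B C"
  obtains x where "\<And>\<rho>. falsifies \<rho> C \<Longrightarrow> \<rho> x = Some False \<Longrightarrow> falsifies \<rho> A"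
    and "\<And>\<rho>. falsifies \<rho> C \<Longrightarrow> \<rho> x = Some True \<Longrightarrow> falsifies \<rho> B"
  using assms unfolding resolvent_def falsifies_def by fastforce

text \<open>The derived lines of the subproof rooted at line \<open>i\<close>. The guard \<open>j < i \<and> l < i\<close> holds in
  every valid proof and only serves termination.\<close>
function derived_lines :: "'a proof_line list \<Rightarrow> nat \<Rightarrow> nat set" where
  "derived_lines \<pi> i = (case snd (\<pi> ! i) of
      None \<Rightarrow> {}
    | Some (j, l) \<Rightarrow>
        if j < i \<and> l < i then insert i (derived_lines \<pi> j \<union> derived_lines \<pi> l) else {i})"
  by auto
termination by (relation "measure (\<lambda>(\<pi>, i). i)") auto

declare derived_lines.simps [simp del]

lemma derived_lines_None: "snd (\<pi> ! i) = None \<Longrightarrow> derived_lines \<pi> i = {}"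
  by (subst derived_lines.simps) simp

lemma derived_lines_Some:
  "snd (\<pi> ! i) = Some (j, l) \<Longrightarrow> j < i \<Longrightarrow> l < i \<Longrightarrow>
    derived_lines \<pi> i = insert i (derived_lines \<pi> j \<union> derived_lines \<pi> l)"
  by (subst derived_lines.simps) simp

lemma derived_lines_le: "m \<in> derived_lines \<pi> i \<Longrightarrow> m \<le> i \<and> snd (\<pi> ! m) \<noteq> None"
proof (induction \<pi> i rule: derived_lines.induct)
  case (1 \<pi> i)
  show ?case
  proof (cases "snd (\<pi> ! i)")
    case (Some p)
    then obtain j l where p: "snd (\<pi> ! i) = Some (j, l)" by (cases p) auto
    show ?thesis
    proof (cases "j < i \<and> l < i \<and> m \<noteq> i")
      case True
      then have "m \<in> derived_lines \<pi> j \<or> m \<in> derived_lines \<pi> l"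
        using "1.prems" derived_lines_Some[OF p] by auto
      then show ?thesis using "1.IH"[OF p refl] True by fastforce
    qed (use "1.prems" p in \<open>auto simp: derived_lines.simps[of \<pi> i] split: if_splits\<close>)
  qed (use "1.prems" derived_lines_None in auto)
qed

lemma finite_derived_lines: "finite (derived_lines \<pi> i)"
  by (rule finite_subset[of _ "{..i}"]) (auto dest: derived_lines_le)

lemma derived_lines_user:
  "m \<in> derived_lines \<pi> i \<Longrightarrow> m \<noteq> i \<Longrightarrow>
    \<exists>a\<in>derived_lines \<pi> i. m \<in> set (premises_of (\<pi> ! a)) \<and> m < a"
proof (induction \<pi> i rule: derived_lines.induct)
  case (1 \<pi> i)
  obtain j l where p: "snd (\<pi> ! i) = Some (j, l)" and jl: "j < i \<and> l < i"
    using "1.prems" by (subst (asm) derived_lines.simps) (auto split: option.splits if_splits)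
  have D: "derived_lines \<pi> i = insert i (derived_lines \<pi> j \<union> derived_lines \<pi> l)"
    using derived_lines_Some p jl by blast
  have prem: "set (premises_of (\<pi> ! i)) = {j, l}"
    using p by (simp add: premises_of_def)
  have "m \<in> derived_lines \<pi> j \<or> m \<in> derived_lines \<pi> l"
    using "1.prems" D by auto
  then show ?case
  proof
    assume "m \<in> derived_lines \<pi> j"
    then show ?thesis
    proof (cases "m = j")
      case False
      then show ?thesis using "1.IH"(1)[OF p refl jl] \<open>m \<in> derived_lines \<pi> j\<close> D by blast
    qed (use D prem jl in auto)
  next
    assume "m \<in> derived_lines \<pi> l"
    then show ?thesis
    proof (cases "m = l")
      case False
      then show ?thesis using "1.IH"(2)[OF p refl jl] \<open>m \<in> derived_lines \<pi> l\<close> D by blast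
    qed (use D prem jl in auto)
  qed
qed

lemma premise_counts_le_uses:
  assumes "A \<subseteq> {..<length \<pi>}"
  shows "(\<Sum>a\<in>A. length (filter (\<lambda>j. j = m) (premises_of (\<pi> ! a)))) \<le> uses \<pi> m"
proof -
  have "uses \<pi> m = (\<Sum>a<length \<pi>. length (filter (\<lambda>j. j = m) (premises_of (\<pi> ! a))))"
    unfolding uses_def filter_concat length_concat map_map
    by (simp add: sum_list_sum_nth atLeast0LessThan comp_def)
  then show ?thesis
    using assms by (simp add: sum_mono2)
qed

lemma treelike_unique_user:
  assumes "treelike \<pi>" "m < length \<pi>" "snd (\<pi> ! m) \<noteq> None"
    and "a < length \<pi>" "m \<in> set (premises_of (\<pi> ! a))"
    and "b < length \<pi>" "m \<in> set (premises_of (\<pi> ! b))"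
  shows "a = b"
proof (rule ccontr)
  assume "a \<noteq> b"
  let ?count = "\<lambda>a. length (filter (\<lambda>j. j = m) (premises_of (\<pi> ! a)))"
  have "1 \<le> ?count x" if "m \<in> set (premises_of (\<pi> ! x))" for x
    using that by (simp add: Suc_le_eq filter_empty_conv)
  then have "2 \<le> ?count a + ?count b"
    using assms(5,7) by (metis add_mono one_add_one)
  also have "\<dots> \<le> uses \<pi> m"
    using premise_counts_le_uses[of "{a, b}" \<pi> m] assms(4,6) \<open>a \<noteq> b\<close> by simp
  finally show False
    using assms(1-3) unfolding treelike_def by auto
qed

lemma treelike_no_self_resolution:
  assumes "treelike \<pi>" "m < length \<pi>" "snd (\<pi> ! m) \<noteq> None"
    and "a < length \<pi>" "snd (\<pi> ! a) = Some (m, m)"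
  shows False
proof -
  have "2 \<le> uses \<pi> m"
    using premise_counts_le_uses[of "{a}" \<pi> m] assms(4,5) by (simp add: premises_of_def)
  then show False
    using assms(1-3) unfolding treelike_def by auto
qed

lemma treelike_derived_lines_disjoint:
  assumes tl: "treelike \<pi>" and valid: "\<forall>i<length \<pi>. valid_line F \<pi> i"
    and i: "i < length \<pi>" and p: "snd (\<pi> ! i) = Some (j, l)"
  shows "derived_lines \<pi> j \<inter> derived_lines \<pi> l = {}"
proof (rule ccontr)
  txt \<open>The largest common line would be used twice: by two distinct lines, or twice by \<open>i\<close>.\<close>
  let ?S = "derived_lines \<pi> j \<inter> derived_lines \<pi> l"
  assume "?S \<noteq> {}"
  have jl: "j < i" "l < i"
    using valid i p by (auto simp: valid_line_def)
  have below_i: "a < i" if "a \<in> derived_lines \<pi> x" "x \<in> {j, l}" for a x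
    using that derived_lines_le jl by fastforce
  define m where "m = Max ?S"
  have "finite ?S"
    by (simp add: finite_derived_lines)
  then have m: "m \<in> ?S" and m_max: "\<And>a. a \<in> ?S \<Longrightarrow> a \<le> m"
    using Max_in[of ?S] \<open>?S \<noteq> {}\<close> unfolding m_def by auto
  have m_line: "m < length \<pi>" "snd (\<pi> ! m) \<noteq> None"
    using m derived_lines_le[of m \<pi> j] below_i[of m j] i by auto
  have user: "\<exists>a<length \<pi>. m \<in> set (premises_of (\<pi> ! a)) \<and>
      (if m = x then a = i else a \<in> derived_lines \<pi> x \<and> m < a)"
    if x: "x \<in> {j, l}" and mx: "m \<in> derived_lines \<pi> x" for x
  proof (cases "m = x")
    case True
    then show ?thesis using x i p by (auto simp: premises_of_def)
  next
    case False
    then obtain a where "a \<in> derived_lines \<pi> x" "m \<in> set (premises_of (\<pi> ! a))" "m < a"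
      using derived_lines_user[OF mx] by blast
    moreover have "a < length \<pi>"
      using below_i[OF \<open>a \<in> derived_lines \<pi> x\<close> x] i by simp
    ultimately show ?thesis
      using False by auto
  qed
  obtain a b where "a < length \<pi>" "m \<in> set (premises_of (\<pi> ! a))"
      and a: "if m = j then a = i else a \<in> derived_lines \<pi> j \<and> m < a"
    and "b < length \<pi>" "m \<in> set (premises_of (\<pi> ! b))"
      and b: "if m = l then b = i else b \<in> derived_lines \<pi> l \<and> m < b"
    using user[of j] user[of l] m by blast
  then have "a = b"
    using treelike_unique_user[OF tl m_line] by blast
  show False
  proof (cases "m = j \<and> m = l")
    case True
    then show False using treelike_no_self_resolution[OF tl m_line i] p by simp
  next
    case False
    then show False using a b \<open>a = b\<close> m_max below_i by (fastforce split: if_splits)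
  qed
qed

lemma card_derived_lines_resolution:
  assumes tl: "treelike \<pi>" and valid: "\<forall>i<length \<pi>. valid_line F \<pi> i"
    and i: "i < length \<pi>" and p: "snd (\<pi> ! i) = Some (j, l)"
  shows "card (derived_lines \<pi> i) = card (derived_lines \<pi> j) + card (derived_lines \<pi> l) + 1"
proof -
  have jl: "j < i" "l < i"
    using valid i p by (auto simp: valid_line_def)
  then have "i \<notin> derived_lines \<pi> j \<union> derived_lines \<pi> l"
    using derived_lines_le by fastforce
  then show ?thesis
    using derived_lines_Some[OF p jl] treelike_derived_lines_disjoint[OF tl valid i p]
    by (simp add: finite_derived_lines card_Un_disjoint)
qed

lemma treelike_measure_bound_at_line:
  fixes \<mu> :: "('a \<rightharpoonup> bool) \<Rightarrow> nat"
  assumes tl: "treelike \<pi>" and valid: "\<forall>i<length \<pi>. valid_line F \<pi> i"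
    and split: "\<And>\<rho> x. \<rho> x = None \<Longrightarrow> \<mu> \<rho> \<le> \<mu> (\<rho>(x \<mapsto> False)) + \<mu> (\<rho>(x \<mapsto> True))"
    and axiom: "\<And>\<rho> C. C \<in> F \<Longrightarrow> falsifies \<rho> C \<Longrightarrow> \<mu> \<rho> \<le> 1"
  shows "i < length \<pi> \<Longrightarrow> falsifies \<rho> (fst (\<pi> ! i)) \<Longrightarrow> \<mu> \<rho> \<le> card (derived_lines \<pi> i) + 1"
proof (induction i arbitrary: \<rho> rule: less_induct)
  case (less i)
  show ?case
  proof (cases "snd (\<pi> ! i)")
    case None
    then have "fst (\<pi> ! i) \<in> F"
      using valid less.prems(1) by (auto simp: valid_line_def)
    then show ?thesis
      using axiom less.prems(2) by fastforce
  next
    case (Some p)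
    then obtain j l where p: "snd (\<pi> ! i) = Some (j, l)"
      by (cases p) auto
    have jl: "j < i" "l < i" and res: "resolvent (fst (\<pi> ! j)) (fst (\<pi> ! l)) (fst (\<pi> ! i))"
      using valid less.prems(1) p by (auto simp: valid_line_def)
    obtain x
      where left: "\<And>\<sigma>. falsifies \<sigma> (fst (\<pi> ! i)) \<Longrightarrow> \<sigma> x = Some False \<Longrightarrow> falsifies \<sigma> (fst (\<pi> ! j))"
        and right: "\<And>\<sigma>. falsifies \<sigma> (fst (\<pi> ! i)) \<Longrightarrow> \<sigma> x = Some True \<Longrightarrow> falsifies \<sigma> (fst (\<pi> ! l))"
      using resolvent_falsified[OF res] by blast
    have IH_left: "\<mu> \<sigma> \<le> card (derived_lines \<pi> j) + 1"
      if "falsifies \<sigma> (fst (\<pi> ! i))" "\<sigma> x = Some False" for \<sigma>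
      using less.IH[OF jl(1)] less.prems(1) jl left[OF that] by simp
    have IH_right: "\<mu> \<sigma> \<le> card (derived_lines \<pi> l) + 1"
      if "falsifies \<sigma> (fst (\<pi> ! i))" "\<sigma> x = Some True" for \<sigma>
      using less.IH[OF jl(2)] less.prems(1) jl right[OF that] by simp
    have card: "card (derived_lines \<pi> i) = card (derived_lines \<pi> j) + card (derived_lines \<pi> l) + 1"
      by (rule card_derived_lines_resolution[OF tl valid less.prems(1) p])
    show ?thesis
    proof (cases "\<rho> x")
      case None
      have "\<mu> \<rho> \<le> \<mu> (\<rho>(x \<mapsto> False)) + \<mu> (\<rho>(x \<mapsto> True))"
        using split[of \<rho> x] None .
      also have "\<dots> \<le> (card (derived_lines \<pi> j) + 1) + (card (derived_lines \<pi> l) + 1)"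
        using IH_left[of "\<rho>(x \<mapsto> False)"] IH_right[of "\<rho>(x \<mapsto> True)"]
          falsifies_upd[OF less.prems(2) None] by (simp add: add_mono)
      finally show ?thesis
        using card by simp
    next
      case (Some b)
      then show ?thesis
        using IH_left IH_right less.prems(2) card by (cases b) fastforce+
    qed
  qed
qed

lemma treelike_refutation_measure_bound:
  fixes \<mu> :: "('a \<rightharpoonup> bool) \<Rightarrow> nat"
  assumes "refutation F \<pi>" "treelike \<pi>"
    and "\<And>\<rho> x. \<rho> x = None \<Longrightarrow> \<mu> \<rho> \<le> \<mu> (\<rho>(x \<mapsto> False)) + \<mu> (\<rho>(x \<mapsto> True))"
    and "\<And>\<rho> C. C \<in> F \<Longrightarrow> falsifies \<rho> C \<Longrightarrow> \<mu> \<rho> \<le> 1"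
  shows "\<mu> Map.empty \<le> length \<pi> + 1"
proof -
  let ?last = "length \<pi> - 1"
  have valid: "\<forall>i<length \<pi>. valid_line F \<pi> i" and last: "?last < length \<pi>"
    and "fst (\<pi> ! ?last) = {}"
    using assms(1) by (auto simp: refutation_def last_conv_nth)
  then have "\<mu> Map.empty \<le> card (derived_lines \<pi> ?last) + 1"
    using treelike_measure_bound_at_line[OF assms(2) valid assms(3,4) last]
    by (simp add: falsifies_def)
  also have "card (derived_lines \<pi> ?last) \<le> card {..<length \<pi>}"
    using derived_lines_le last by (intro card_mono) fastforce+
  finally show ?thesis
    by simp
qed

section \<open>Consistent homogeneous sets\<close>

definition homogeneous :: "nat set set \<Rightarrow> bool \<Rightarrow> nat set \<Rightarrow> bool" where
  "homogeneous E t K \<longleftrightarrow> (\<forall>u\<in>K. \<forall>v\<in>K. u \<noteq> v \<longrightarrow> ({u, v} \<in> E) = t)"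

definition homogeneous_sets :: "nat \<Rightarrow> nat set set \<Rightarrow> bool \<Rightarrow> nat set set" where
  "homogeneous_sets n E t = {K. K \<subseteq> {0..<n} \<and> homogeneous E t K}"

lemma finite_homogeneous_sets: "finite (homogeneous_sets n E t)"
  unfolding homogeneous_sets_def by (rule finite_subset[of _ "Pow {0..<n}"]) auto

text \<open>The Delayer aiming at \<open>K\<close> and colour \<open>t\<close> places indices injectively into \<open>K\<close>, and sets
  \<open>P i v\<close> to false only when forced: \<open>v \<notin> K\<close>, index \<open>i\<close> is already placed, or \<open>v\<close> is taken.\<close>
definition consistent :: "bool \<Rightarrow> nat set \<Rightarrow> (pvar \<rightharpoonup> bool) \<Rightarrow> bool" where
  "consistent t K \<rho> \<longleftrightarrow> \<rho> Y \<noteq> Some (\<not> t)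
     \<and> (\<forall>i v. \<rho> (P i v) = Some True \<longrightarrow> v \<in> K)
     \<and> (\<forall>i u v. \<rho> (P i u) = Some True \<longrightarrow> \<rho> (P i v) = Some True \<longrightarrow> u = v)
     \<and> (\<forall>i j v. \<rho> (P i v) = Some True \<longrightarrow> \<rho> (P j v) = Some True \<longrightarrow> i = j)
     \<and> (\<forall>i v. \<rho> (P i v) = Some False \<longrightarrow>
          v \<notin> K \<or> (\<exists>w. \<rho> (P i w) = Some True) \<or> (\<exists>j. \<rho> (P j v) = Some True))"

definition consistent_count :: "nat \<Rightarrow> nat set set \<Rightarrow> bool \<Rightarrow> (pvar \<rightharpoonup> bool) \<Rightarrow> nat" where
  "consistent_count n E t \<rho> = card {K \<in> homogeneous_sets n E t. consistent t K \<rho>}"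

lemma consistent_count_empty: "consistent_count n E t Map.empty = card (homogeneous_sets n E t)"
  unfolding consistent_count_def consistent_def by simp

lemma consistent_upd:
  assumes "consistent t K \<rho>" "\<rho> x = None"
  shows "consistent t K (\<rho>(x \<mapsto> False)) \<or> consistent t K (\<rho>(x \<mapsto> True))"
proof (cases x)
  case Y
  then show ?thesis
    using assms by (cases t) (auto simp: consistent_def)
next
  case (P i v)
  note K = assms(1)[unfolded consistent_def]
  show ?thesis
  proof (cases "v \<notin> K \<or> (\<exists>w. \<rho> (P i w) = Some True) \<or> (\<exists>j. \<rho> (P j v) = Some True)")
    case True
    let ?\<sigma> = "\<rho>(x \<mapsto> False)"
    have true: "\<And>z. ?\<sigma> z = Some True \<longleftrightarrow> \<rho> z = Some True"
      using assms(2) by auto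
    have false: "\<And>a b. ?\<sigma> (P a b) = Some False \<longleftrightarrow> \<rho> (P a b) = Some False \<or> (a = i \<and> b = v)"
      using P by auto
    have "consistent t K ?\<sigma>"
      unfolding consistent_def true false using K True P by auto
    then show ?thesis by blast
  next
    case False
    let ?\<sigma> = "\<rho>(x \<mapsto> True)"
    have true: "\<And>a b. ?\<sigma> (P a b) = Some True \<longleftrightarrow> \<rho> (P a b) = Some True \<or> (a = i \<and> b = v)"
      using P by auto
    have false: "\<And>z. ?\<sigma> z = Some False \<longleftrightarrow> \<rho> z = Some False"
      using assms(2) by auto
    have unchanged_Y: "?\<sigma> Y = \<rho> Y"
      using P by auto
    have "consistent t K ?\<sigma>"
      unfolding consistent_def true false unchanged_Y using K False by (intro conjI) blast+
    then show ?thesis by blast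
  qed
qed

lemma consistent_count_upd:
  assumes "\<rho> x = None"
  shows "consistent_count n E t \<rho> \<le>
    consistent_count n E t (\<rho>(x \<mapsto> False)) + consistent_count n E t (\<rho>(x \<mapsto> True))"
proof -
  let ?C = "\<lambda>\<sigma>. {K \<in> homogeneous_sets n E t. consistent t K \<sigma>}"
  have "?C \<rho> \<subseteq> ?C (\<rho>(x \<mapsto> False)) \<union> ?C (\<rho>(x \<mapsto> True))"
    using consistent_upd[of t _ \<rho> x] assms by blast
  then have "card (?C \<rho>) \<le> card (?C (\<rho>(x \<mapsto> False)) \<union> ?C (\<rho>(x \<mapsto> True)))"
    by (intro card_mono) (auto intro: finite_subset[OF _ finite_homogeneous_sets])
  also have "\<dots> \<le> card (?C (\<rho>(x \<mapsto> False))) + card (?C (\<rho>(x \<mapsto> True)))"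
    by (rule card_Un_le)
  finally show ?thesis
    unfolding consistent_count_def .
qed

lemma consistent_falsified_axiom:
  assumes D: "D \<in> Psi' n k E" and falsified: "falsifies \<rho> D"
    and K: "K \<in> homogeneous_sets n E t" and consistent: "consistent t K \<rho>"
  shows "K = {v. \<exists>i. \<rho> (P i v) = Some True}"
proof -
  have K_range: "K \<subseteq> {0..<n}" and hom: "homogeneous E t K"
    using K by (auto simp: homogeneous_sets_def)
  note C = consistent[unfolded consistent_def]
  from D show ?thesis
    unfolding Psi'_def
  proof (elim UnE)
    assume "D \<in> {{Pos (P i v) | v. v < n} | i. i < k}"
    then obtain i where "D = {Pos (P i v) | v. v < n}"
      by blast
    then have unmapped: "\<rho> (P i v) = Some False" if "v < n" for v
      using falsified that by (auto simp: falsifies_def)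
    have i_unplaced: "\<rho> (P i w) \<noteq> Some True" for w
    proof
      assume "\<rho> (P i w) = Some True"
      moreover from this have "w \<in> K"
        using C by blast
      ultimately show False
        using unmapped K_range by auto
    qed
    have "\<exists>j. \<rho> (P j v) = Some True" if "v \<in> K" for v
    proof -
      have "\<rho> (P i v) = Some False"
        using unmapped that K_range by auto
      then show ?thesis
        using C i_unplaced that by blast
    qed
    then have "K \<subseteq> {v. \<exists>i. \<rho> (P i v) = Some True}"
      by blast
    moreover have "{v. \<exists>i. \<rho> (P i v) = Some True} \<subseteq> K"
      using C by blast
    ultimately show ?thesis
      by blast
  next
    assume "D \<in> {{Neg (P i u), Neg (P i v)} | i u v. i < k \<and> u < n \<and> v < n \<and> u \<noteq> v}"
    then show ?thesis
      using falsified C by (auto simp: falsifies_def)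
  next
    assume "D \<in> {{Neg (P i v), Neg (P j v)} | i j v. v < n \<and> i < k \<and> j < k \<and> i \<noteq> j}"
    then show ?thesis
      using falsified C by (auto simp: falsifies_def)
  next
    assume "D \<in> {{Pos Y, Neg (P i u), Neg (P j v)} | i j u v.
         u < n \<and> v < n \<and> u \<noteq> v \<and> {u, v} \<in> E \<and> i < k \<and> j < k \<and> i \<noteq> j}"
    then show ?thesis
      using falsified C hom by (cases t) (auto simp: falsifies_def homogeneous_def)
  next
    assume "D \<in> {{Neg Y, Neg (P i u), Neg (P j v)} | i j u v.
         u < n \<and> v < n \<and> u \<noteq> v \<and> {u, v} \<notin> E \<and> i < k \<and> j < k \<and> i \<noteq> j}"
    then show ?thesis
      using falsified C hom by (cases t) (auto simp: falsifies_def homogeneous_def)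
  qed
qed

lemma consistent_count_falsified_axiom:
  assumes "D \<in> Psi' n k E" "falsifies \<rho> D"
  shows "consistent_count n E t \<rho> \<le> 1"
proof -
  have "finite {K \<in> homogeneous_sets n E t. consistent t K \<rho>}"
    by (simp add: finite_homogeneous_sets)
  moreover have "K = K'"
    if "K \<in> {K \<in> homogeneous_sets n E t. consistent t K \<rho>}"
      and "K' \<in> {K \<in> homogeneous_sets n E t. consistent t K \<rho>}" for K K'
    using that consistent_falsified_axiom[OF assms, of K t] consistent_falsified_axiom[OF assms, of K' t]
    by simp
  ultimately show ?thesis
    unfolding consistent_count_def by (simp add: card_le_Suc0_iff_eq)
qed

lemma card_homogeneous_sets_le_treelike_refutation:
  assumes "refutation (Psi' n k E) \<pi>" "treelike \<pi>"
  shows "card (homogeneous_sets n E t) \<le> length \<pi> + 1"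
  using treelike_refutation_measure_bound[of _ _ "consistent_count n E t",
      OF assms consistent_count_upd consistent_count_falsified_axiom]
  by (simp add: consistent_count_empty)

section \<open>Counting homogeneous sets\<close>

definition homogeneous_lists :: "nat set set \<Rightarrow> bool \<Rightarrow> nat set \<Rightarrow> nat \<Rightarrow> nat list set" where
  "homogeneous_lists E t V a =
     {xs. distinct xs \<and> length xs = a \<and> set xs \<subseteq> V \<and> homogeneous E t (set xs)}"

definition neighbours :: "nat set set \<Rightarrow> bool \<Rightarrow> nat \<Rightarrow> nat set \<Rightarrow> nat set" where
  "neighbours E t v V = {w \<in> V. w \<noteq> v \<and> ({v, w} \<in> E) = t}"

lemma finite_homogeneous_lists: "finite V \<Longrightarrow> finite (homogeneous_lists E t V a)"
  unfolding homogeneous_lists_def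
  by (rule finite_subset[OF _ finite_lists_length_eq[of V a]]) auto

lemma homogeneous_lists_mono: "V \<subseteq> W \<Longrightarrow> homogeneous_lists E t V a \<subseteq> homogeneous_lists E t W a"
  unfolding homogeneous_lists_def by auto

lemma homogeneous_lists_0: "homogeneous_lists E t V 0 = {[]}"
  unfolding homogeneous_lists_def homogeneous_def by auto

lemma card_neighbours:
  assumes "finite V" "v \<in> V"
  shows "card (neighbours E t v V) + card (neighbours E (\<not> t) v V) = card V - 1"
proof -
  have "neighbours E t v V \<union> neighbours E (\<not> t) v V = V - {v}"
    and "neighbours E t v V \<inter> neighbours E (\<not> t) v V = {}"
    unfolding neighbours_def by auto
  moreover have "finite (neighbours E t v V)" "finite (neighbours E (\<not> t) v V)"
    using assms(1) unfolding neighbours_def by auto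
  ultimately show ?thesis
    using card_Un_disjoint assms by (metis card_Diff_singleton)
qed

lemma sum_card_homogeneous_lists_neighbours:
  assumes V: "finite V" and W: "W \<subseteq> V"
  shows "(\<Sum>v\<in>W. card (homogeneous_lists E t (neighbours E t v V) a))
    \<le> card (homogeneous_lists E t V (Suc a))"
proof -
  have "finite W"
    using V W finite_subset by blast
  have "(\<Union>v\<in>W. (Cons v) ` homogeneous_lists E t (neighbours E t v V) a)
      \<subseteq> homogeneous_lists E t V (Suc a)"
  proof clarify
    fix v xs
    assume v: "v \<in> W" and xs: "xs \<in> homogeneous_lists E t (neighbours E t v V) a"
    then have "v \<notin> set xs" "set xs \<subseteq> V" "distinct xs" "length xs = a"
      and hom: "homogeneous E t (set xs)" and adj: "\<And>w. w \<in> set xs \<Longrightarrow> ({v, w} \<in> E) = t"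
      unfolding homogeneous_lists_def neighbours_def by auto
    moreover have "homogeneous E t (insert v (set xs))"
      using hom adj unfolding homogeneous_def by (metis insert_commute insert_iff)
    ultimately show "v # xs \<in> homogeneous_lists E t V (Suc a)"
      using v W unfolding homogeneous_lists_def by auto
  qed
  then have "card (\<Union>v\<in>W. (Cons v) ` homogeneous_lists E t (neighbours E t v V) a)
      \<le> card (homogeneous_lists E t V (Suc a))"
    by (rule card_mono[OF finite_homogeneous_lists[OF V]])
  moreover have "card (\<Union>v\<in>W. (Cons v) ` homogeneous_lists E t (neighbours E t v V) a)
      = (\<Sum>v\<in>W. card (homogeneous_lists E t (neighbours E t v V) a))"
    using \<open>finite W\<close> V
    by (subst card_UN_disjoint)
      (auto intro!: finite_imageI finite_homogeneous_lists simp: neighbours_def card_image)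
  ultimately show ?thesis
    by simp
qed

lemma homogeneous_lists_extend:
  assumes V: "finite V" and W: "W \<subseteq> V" "x \<le> card W"
    and each: "\<And>v. v \<in> W \<Longrightarrow> x ^ a \<le> card (homogeneous_lists E t (neighbours E t v V) a)
      \<or> x ^ b \<le> card (homogeneous_lists E (\<not> t) (neighbours E t v V) b)"
  shows "x ^ Suc a \<le> card (homogeneous_lists E t V (Suc a))
    \<or> x ^ b \<le> card (homogeneous_lists E (\<not> t) V b)"
proof (cases "\<exists>v\<in>W. x ^ b \<le> card (homogeneous_lists E (\<not> t) (neighbours E t v V) b)")
  case True
  then obtain v where "x ^ b \<le> card (homogeneous_lists E (\<not> t) (neighbours E t v V) b)"
    by blast
  also have "\<dots> \<le> card (homogeneous_lists E (\<not> t) V b)"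
    by (intro card_mono finite_homogeneous_lists homogeneous_lists_mono V)
      (auto simp: neighbours_def)
  finally show ?thesis ..
next
  case False
  have "x ^ Suc a \<le> card W * x ^ a"
    using W(2) by simp
  also have "\<dots> = (\<Sum>v\<in>W. x ^ a)"
    by simp
  also have "\<dots> \<le> (\<Sum>v\<in>W. card (homogeneous_lists E t (neighbours E t v V) a))"
    using each False by (intro sum_mono) auto
  also have "\<dots> \<le> card (homogeneous_lists E t V (Suc a))"
    by (rule sum_card_homogeneous_lists_neighbours[OF V W(1)])
  finally show ?thesis ..
qed

text \<open>Every vertex has at least \<open>T\<close> neighbours of one colour, and extending homogeneous lists
  through \<open>x\<close> such vertices multiplies their number by \<open>x\<close>.\<close>
lemma many_homogeneous_lists:
  assumes "finite V" "2 * x * 2 ^ (a + b) \<le> card V"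
  shows "x ^ a \<le> card (homogeneous_lists E t V a) \<or> x ^ b \<le> card (homogeneous_lists E (\<not> t) V b)"
  using assms
proof (induction "a + b" arbitrary: a b t V rule: less_induct)
  case less
  show ?case
  proof (cases "a = 0 \<or> b = 0")
    case True
    then show ?thesis
      by (auto simp: homogeneous_lists_0)
  next
    case False
    then obtain a' b' where a: "a = Suc a'" and b: "b = Suc b'"
      by (metis not0_implies_Suc)
    define T where "T = 2 * x * 2 ^ (a' + b)"
    have T_swap: "T = 2 * x * 2 ^ (b' + a)"
      unfolding T_def a b by simp
    have "2 * T \<le> card V"
      using less.prems(2) a by (simp add: T_def algebra_simps)
    define W where "W s = {v \<in> V. T \<le> card (neighbours E s v V)}" for s
    have "V \<subseteq> W t \<union> W (\<not> t)"
    proof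
      fix v
      assume "v \<in> V"
      then have "card (neighbours E t v V) + card (neighbours E (\<not> t) v V) = card V - 1"
        by (rule card_neighbours[OF less.prems(1)])
      then show "v \<in> W t \<union> W (\<not> t)"
        using \<open>v \<in> V\<close> \<open>2 * T \<le> card V\<close> unfolding W_def by auto
    qed
    then have "card V \<le> card (W t \<union> W (\<not> t))"
      using less.prems(1) by (intro card_mono) (auto simp: W_def)
    also have "\<dots> \<le> card (W t) + card (W (\<not> t))"
      by (rule card_Un_le)
    finally have "card V \<le> card (W t) + card (W (\<not> t))" .
    moreover have "2 * x \<le> card V"
    proof -
      have "x \<le> T"
        unfolding T_def by simp
      then show ?thesis
        using \<open>2 * T \<le> card V\<close> by linarith
    qed
    ultimately consider "x \<le> card (W t)" | "x \<le> card (W (\<not> t))"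
      by linarith
    then show ?thesis
    proof cases
      case 1
      have "x ^ a' \<le> card (homogeneous_lists E t (neighbours E t v V) a')
          \<or> x ^ b \<le> card (homogeneous_lists E (\<not> t) (neighbours E t v V) b)" if "v \<in> W t" for v
        using less.hyps[of a' b] a less.prems(1) that unfolding W_def T_def
        by (simp add: neighbours_def)
      then show ?thesis
        using homogeneous_lists_extend[OF less.prems(1) _ 1] a unfolding W_def by auto
    next
      case 2
      have "x ^ b' \<le> card (homogeneous_lists E (\<not> t) (neighbours E (\<not> t) v V) b')
          \<or> x ^ a \<le> card (homogeneous_lists E (\<not> \<not> t) (neighbours E (\<not> t) v V) a)"
        if "v \<in> W (\<not> t)" for v
        using less.hyps[of b' a "neighbours E (\<not> t) v V" "\<not> t"] b less.prems(1) that
        unfolding W_def T_swap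
        by (simp add: neighbours_def)
      then have "x ^ Suc b' \<le> card (homogeneous_lists E (\<not> t) V (Suc b'))
          \<or> x ^ a \<le> card (homogeneous_lists E (\<not> \<not> t) V a)"
        using homogeneous_lists_extend[where t = "\<not> t", OF less.prems(1) _ 2] unfolding W_def by auto
      then show ?thesis
        using b by auto
    qed
  qed
qed

lemma card_homogeneous_lists_le:
  "card (homogeneous_lists E t {0..<n} s) \<le> card (homogeneous_sets n E t) * fact s"
proof -
  let ?S = "{K \<in> homogeneous_sets n E t. card K = s}"
  have finite_S: "finite ?S"
    by (simp add: finite_homogeneous_sets)
  have "homogeneous_lists E t {0..<n} s \<subseteq> (\<Union>K\<in>?S. permutations_of_set K)"
    unfolding homogeneous_lists_def permutations_of_set_def homogeneous_sets_def
    by (auto simp: distinct_card)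
  then have "card (homogeneous_lists E t {0..<n} s) \<le> card (\<Union>K\<in>?S. permutations_of_set K)"
    using finite_S by (intro card_mono) auto
  also have "\<dots> \<le> (\<Sum>K\<in>?S. card (permutations_of_set K))"
    using finite_S by (rule card_UN_le)
  also have "\<dots> = (\<Sum>K\<in>?S. fact s)"
  proof (intro sum.cong refl)
    fix K
    assume "K \<in> ?S"
    then have "finite K" "card K = s"
      unfolding homogeneous_sets_def by (auto intro: finite_subset)
    then show "card (permutations_of_set K) = fact s"
      by simp
  qed
  also have "\<dots> \<le> card (homogeneous_sets n E t) * fact s"
    by (simp add: card_mono finite_homogeneous_sets)
  finally show ?thesis .
qed

lemma many_homogeneous_sets:
  assumes "2 * 16 ^ s \<le> n"
  obtains t where "2 ^ (s * s) \<le> card (homogeneous_sets n E t)"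
proof -
  have "2 * 4 ^ s * 2 ^ (s + s) \<le> card {0..<n}"
    using assms by (simp add: power_add mult.assoc flip: power_mult_distrib)
  then obtain t where t: "(4 ^ s) ^ s \<le> card (homogeneous_lists E t {0..<n} s)"
    using many_homogeneous_lists[of "{0..<n}" "4 ^ s" s s E True] by auto
  have "fact s \<le> (2::nat) ^ (s * s)"
  proof -
    have "fact s \<le> s ^ s"
      using fact_le_power[where 'a = nat] by simp
    also have "\<dots> \<le> (2 ^ s) ^ s"
      by (intro power_mono) (simp_all add: less_imp_le)
    finally show ?thesis
      by (simp add: power_mult)
  qed
  have "(2::nat) ^ (s * s) * 2 ^ (s * s) = (4 ^ s) ^ s"
    by (simp add: power_mult[symmetric] power_mult_distrib[symmetric] flip: power_add)
  also have "\<dots> \<le> card (homogeneous_sets n E t) * fact s"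
    using t card_homogeneous_lists_le[of E t n s] by linarith
  also have "\<dots> \<le> card (homogeneous_sets n E t) * 2 ^ (s * s)"
    using \<open>fact s \<le> 2 ^ (s * s)\<close> by simp
  finally show ?thesis
    using that by simp
qed

lemma log_over_8_bounds:
  fixes n :: nat
  assumes n: "2 ^ 32 \<le> n"
  defines "L \<equiv> log 2 (real n)"
  defines "s \<equiv> nat \<lfloor>L / 8\<rfloor>"
  shows "2 * 16 ^ s \<le> n" and "real n powr (1/512 * L) \<le> 2 ^ (s * s) - 1"
proof -
  have n_pos: "real n > 0"
    using n by (simp add: less_le_trans[of 0 "2 ^ 32"])
  have "log 2 (2 powr 32) \<le> L"
    unfolding L_def using n n_pos by (subst log_le_cancel_iff) (auto simp: powr_realpow)
  moreover have "log 2 (2 powr 32) = (32::real)"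
    by (rule log_powr_cancel) auto
  ultimately have L32: "32 \<le> L"
    by simp
  have n_eq: "real n = 2 powr L"
    unfolding L_def using n_pos by simp
  have s_upper: "real s \<le> L / 8" and s_lower: "L / 8 - 1 \<le> real s"
    unfolding s_def using L32 by linarith+
  have "real (2 * 16 ^ s) = 2 powr (4 * real s + 1)"
    by (simp add: powr_add powr_realpow[symmetric] powr_mult[symmetric] powr_powr[symmetric])
  also have "\<dots> \<le> 2 powr L"
    using s_upper L32 by (intro powr_mono) auto
  finally show "2 * 16 ^ s \<le> n"
    using n_eq by (simp only: of_nat_le_iff)
  define X where "X = 2 powr (L * L / 512)"
  have "(4::real) = 2 powr 2"
    by simp
  also have "\<dots> \<le> X"
    unfolding X_def using L32 mult_mono[of 32 L 32 L] by (intro powr_mono) auto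
  finally have X4: "4 \<le> X" .
  have "real n powr (1/512 * L) = X"
    unfolding X_def n_eq powr_powr by (simp add: algebra_simps)
  also have "\<dots> \<le> X * X - 1"
    using X4 mult_right_mono[OF X4, of X] by linarith
  also have "X * X = 2 powr (L * L / 256)"
    unfolding X_def by (simp add: powr_add[symmetric])
  also have "\<dots> \<le> 2 powr (real s * real s)"
  proof (intro powr_mono)
    have "(L / 16) * (L / 16) \<le> real s * real s"
      using s_lower L32 by (intro mult_mono) auto
    then show "L * L / 256 \<le> real s * real s"
      by simp
  qed simp
  also have "\<dots> = real (2 ^ (s * s))"
    by (simp add: powr_realpow[symmetric])
  finally show "real n powr (1/512 * L) \<le> 2 ^ (s * s) - 1"
    by simp
qed

theorem mainTheorem3:
  fixes c :: real
  assumes "c > 0"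
  shows "\<exists>\<epsilon>::real. \<epsilon> > 0 \<and> (\<exists>N::nat. \<forall>n k E \<pi>. n \<ge> N \<longrightarrow>
           real k = c * log 2 (real n) \<longrightarrow> simple_graph n E \<longrightarrow> ramsey_graph n k E \<longrightarrow>
           refutation (Psi' n k E) \<pi> \<longrightarrow> treelike \<pi> \<longrightarrow>
           real (length \<pi>) \<ge> real n powr (\<epsilon> * log 2 (real n)))"
proof (intro exI conjI allI impI)
  show "(1/512::real) > 0"
    by simp
  fix n k E and \<pi> :: "pvar proof_line list"
  assume n: "2 ^ 32 \<le> n" and "refutation (Psi' n k E) \<pi>" "treelike \<pi>"
  define s where "s = nat \<lfloor>log 2 (real n) / 8\<rfloor>"
  note bounds = log_over_8_bounds[OF n, folded s_def]
  obtain t where "2 ^ (s * s) \<le> card (homogeneous_sets n E t)"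
    using many_homogeneous_sets[OF bounds(1)] by blast
  also have "\<dots> \<le> length \<pi> + 1"
    using card_homogeneous_sets_le_treelike_refutation \<open>refutation (Psi' n k E) \<pi>\<close> \<open>treelike \<pi>\<close> .
  finally have "real (2 ^ (s * s)) \<le> real (length \<pi>) + 1"
    by linarith
  then show "real n powr (1/512 * log 2 (real n)) \<le> real (length \<pi>)"
    using bounds(2) by simp
qed
end
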